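(* Let $E$ be a finite set and $\mathcal{W}\subseteq\{+,-,0\}^E$. Then $\mathcal{W}$ is an affine oriented matroid if and only if $\mathcal{W}$ satisfies: (A1') if $X,Y\in\mathcal{W}$ then $X\circ(-Y)\in\mathcal{W}$; (A2') if $X,Y\in\mathcal{W}$ with $S(X,Y)\neq\emptyset$, then $I'_e(X,Y)\cap\mathcal{W}\neq\emptyset$ for all $e\in S(X,Y)$; (A3') $\mathcal{Q}(\mathcal{W})\circ\mathcal{W}\subseteq\mathcal{W}$.
   Context: For $X\in\{+,-,0\}^E$: $X^+=\{e:X_e=+\}$, $X^-=\{e:X_e=-\}$, support $\underline{X}=X^+\cup X^-$; $(-X)_e=-X_e$; composition $(X\circ Y)_e=X_e$ if $X_e\neq0$, else $Y_e$; $S(X,Y)=(X^+\cap Y^-)\cup(X^-\cap Y^+)$; $\mathcal{A}\circ\mathcal{B}=\{A\circ B: A\in\mathcal{A}, B\in\mathcal{B}\}$. Sum: $(X+Y)_e=0$ if $e\in S(X,Y)$, else $(X\circ Y)_e$. An oriented matroid on $F$ is $\mathcal{O}\subseteq\{+,-,0\}^F$ with: (O1) zero vector in $\mathcal{O}$; (O2) $X\in\mathcal{O}\Rightarrow -X\in\mathcal{O}$; (O3) $X,Y\in\mathcal{O}\Rightarrow X\circ Y\in\mathcal{O}$; (O4) if $X,Y\in\mathcal{O}$, $\underline{X}=\underline{Y}$, $e\in S(X,Y)$, there is $Z\in\mathcal{O}$ with $Z_e=0$ and $Z_f=(X\circ Y)_f=(Y\circ X)_f$ for all $f\notin S(X,Y)$.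 $\mathcal{W}\subseteq\{+,-,0\}^E$ is an affine oriented matroid if there exist $g\notin E$ and an oriented matroid $\mathcal{O}$ on $E\cup\{g\}$ with $\mathcal{W}=\{X|_E: X\in\mathcal{O}, X_g=+\}$. For arbitrary $X,Y$ and $e\in S(X,Y)$: $I'_e(X,Y)=\{V : \underline{V}\subseteq(\underline{X}\cup\underline{Y})\setminus\{e\}, V_f=(X\circ Y)_f\ \forall f\notin S(X,Y)\}$, $I'(X,Y)=\bigcup_{e\in S(X,Y)}I'_e(X,Y)$ (empty if $S(X,Y)=\emptyset$). $\mathcal{Q}(\mathcal{W})=\{X+(-Y): X,Y\in\mathcal{W}, I'(X,-Y)\cap\mathcal{W}=I'(-X,Y)\cap\mathcal{W}=\emptyset\}$. *)

theory Defs
  imports Main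
begin

datatype sign = Pos | Neg | Zero

type_synonym 'e signvec = "'e \<Rightarrow> sign"

definition sv_set :: "'e set \<Rightarrow> 'e signvec set" where
  "sv_set E = {X. \<forall>e. e \<notin> E \<longrightarrow> X e = Zero}"

definition zerov :: "'e signvec" where
  "zerov = (\<lambda>_. Zero)"

definition negv :: "'e signvec \<Rightarrow> 'e signvec" where
  "negv X = (\<lambda>e. case X e of Pos \<Rightarrow> Neg | Neg \<Rightarrow> Pos | Zero \<Rightarrow> Zero)"

definition supp :: "'e signvec \<Rightarrow> 'e set" where
  "supp X = {e. X e \<noteq> Zero}"

definition comp :: "'e signvec \<Rightarrow> 'e signvec \<Rightarrow> 'e signvec" where
  "comp X Y = (\<lambda>e. if X e \<noteq> Zero then X e else Y e)"

definition sep :: "'e signvec \<Rightarrow> 'e signvec \<Rightarrow> 'e set" where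
  "sep X Y = {e. (X e = Pos \<and> Y e = Neg) \<or> (X e = Neg \<and> Y e = Pos)}"

definition sv_sum :: "'e signvec \<Rightarrow> 'e signvec \<Rightarrow> 'e signvec" where
  "sv_sum X Y = (\<lambda>e. if e \<in> sep X Y then Zero else comp X Y e)"

definition compset :: "'e signvec set \<Rightarrow> 'e signvec set \<Rightarrow> 'e signvec set" where
  "compset A B = {comp X Y | X Y. X \<in> A \<and> Y \<in> B}"

definition oriented_matroid :: "'e set \<Rightarrow> 'e signvec set \<Rightarrow> bool" where
  "oriented_matroid F Om \<longleftrightarrow>
     Om \<subseteq> sv_set F \<and>
     zerov \<in> Om \<and>
     (\<forall>X\<in>Om. negv X \<in> Om) \<and>
     (\<forall>X\<in>Om. \<forall>Y\<in>Om. comp X Y \<in> Om) \<and>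
     (\<forall>X\<in>Om. \<forall>Y\<in>Om. \<forall>e. supp X = supp Y \<and> e \<in> sep X Y \<longrightarrow>
        (\<exists>Z\<in>Om. Z e = Zero \<and>
           (\<forall>f\<in>F. f \<notin> sep X Y \<longrightarrow> Z f = comp X Y f \<and> Z f = comp Y X f)))"

text \<open>Affine oriented matroid: the new element g is modelled as None in the
  ground set Some ` E \<union> {None}; restriction to E is precomposition with Some.\<close>
definition affine_om :: "'e set \<Rightarrow> 'e signvec set \<Rightarrow> bool" where
  "affine_om E W \<longleftrightarrow>
     (\<exists>Om :: 'e option signvec set. oriented_matroid (Some ` E \<union> {None}) Om \<and>
        W = {(\<lambda>e. X (Some e)) | X. X \<in> Om \<and> X None = Pos})"

definition I'e :: "'e signvec \<Rightarrow> 'e signvec \<Rightarrow> 'e \<Rightarrow> 'e signvec set" where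
  "I'e X Y e = {V. supp V \<subseteq> (supp X \<union> supp Y) - {e} \<and>
                   (\<forall>f. f \<notin> sep X Y \<longrightarrow> V f = comp X Y f)}"

definition I' :: "'e signvec \<Rightarrow> 'e signvec \<Rightarrow> 'e signvec set" where
  "I' X Y = (\<Union>e\<in>sep X Y. I'e X Y e)"

definition Qset :: "'e signvec set \<Rightarrow> 'e signvec set" where
  "Qset W = {sv_sum X (negv Y) | X Y. X \<in> W \<and> Y \<in> W \<and>
              I' X (negv Y) \<inter> W = {} \<and> I' (negv X) Y \<inter> W = {}}"

end

theory Submission
  imports Defs
begin

text \<open>Necessity: (A1') and (A2') are composition and elimination in the oriented matroid on
  \<open>E \<union> {g}\<close>, restricted to \<open>X\<^sub>g = +\<close>. For (A3'), eliminating \<open>g\<close> between \<open>X\<close> and \<open>-Y\<close> gives a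
  vector \<open>V\<close> with \<open>V\<^sub>g = 0\<close>; any nonzero entry of \<open>V\<close> on \<open>S(X,-Y)\<close> could be eliminated
  further and would produce a member of \<open>I'(X,-Y) \<inter> W\<close> or \<open>I'(-X,Y) \<inter> W\<close>, so \<open>V = X + (-Y)\<close>.

  Sufficiency: take as vectors with \<open>g\<close>-entry \<open>+\<close>, \<open>-\<close>, \<open>0\<close> the sets \<open>W\<close>, \<open>-W\<close> and the set of
  all \<open>V\<close> with \<open>V \<circ> X, (-V) \<circ> X \<in> W\<close> for every \<open>X \<in> W\<close>. By (A3') the last set contains
  \<open>Q(W)\<close>, and by induction on \<open>|S(X,-Y)|\<close>, using (A2'), it contains a vector agreeing with
  \<open>X \<circ> (-Y)\<close> off \<open>S(X,-Y)\<close> for all \<open>X, Y \<in> W\<close>. This is what elimination needs, both across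
  the two halves \<open>W\<close> and \<open>-W\<close> and inside the zero level.\<close>

lemma negv_negv [simp]: "negv (negv X) = X"
  by (auto simp: negv_def fun_eq_iff split: sign.splits)

lemma negv_eq_Zero_iff [simp]: "negv X e = Zero \<longleftrightarrow> X e = Zero"
  by (auto simp: negv_def split: sign.splits)

lemma negv_eq_negv_iff [simp]: "negv X e = negv Y f \<longleftrightarrow> X e = Y f"
  by (cases "X e"; cases "Y f") (simp_all add: negv_def)

lemma negv_comp: "negv (comp X Y) = comp (negv X) (negv Y)"
  by (simp add: comp_def fun_eq_iff)

lemma comp_assoc_signvec: "comp (comp X Y) Z = comp X (comp Y Z)"
  by (auto simp: comp_def fun_eq_iff)

lemma sep_commute: "sep X Y = sep Y X"
  by (auto simp: sep_def)

lemma sep_negv_negv [simp]: "sep (negv X) (negv Y) = sep X Y"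
proof (rule set_eqI)
  show "f \<in> sep (negv X) (negv Y) \<longleftrightarrow> f \<in> sep X Y" for f
    by (cases "X f"; cases "Y f") (simp_all add: sep_def negv_def)
qed

lemma sep_negv_left: "sep (negv X) Y = sep X (negv Y)"
proof (rule set_eqI)
  show "f \<in> sep (negv X) Y \<longleftrightarrow> f \<in> sep X (negv Y)" for f
    by (cases "X f"; cases "Y f") (simp_all add: sep_def negv_def)
qed

lemma comp_commute_off_sep: "f \<notin> sep X Y \<Longrightarrow> comp Y X f = comp X Y f"
  by (cases "X f"; cases "Y f") (auto simp: comp_def sep_def)

definition agrees_off_sep :: "'e signvec \<Rightarrow> 'e signvec \<Rightarrow> 'e signvec \<Rightarrow> bool" where
  "agrees_off_sep Z X Y \<longleftrightarrow> (\<forall>f. f \<notin> sep X Y \<longrightarrow> Z f = comp X Y f)"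

lemma agrees_off_sepD: "agrees_off_sep Z X Y \<Longrightarrow> f \<notin> sep X Y \<Longrightarrow> Z f = comp X Y f"
  by (simp add: agrees_off_sep_def)

lemma agrees_off_sep_commute: "agrees_off_sep Z X Y \<longleftrightarrow> agrees_off_sep Z Y X"
  by (metis agrees_off_sep_def comp_commute_off_sep sep_commute)

lemma agrees_off_sep_negv [simp]:
  "agrees_off_sep (negv Z) (negv X) (negv Y) \<longleftrightarrow> agrees_off_sep Z X Y"
  by (simp add: agrees_off_sep_def negv_comp[symmetric])

lemma agrees_off_sep_sv_sum: "agrees_off_sep (sv_sum X Y) X Y"
  by (simp add: agrees_off_sep_def sv_sum_def)

lemma sv_sum_eqI:
  assumes "agrees_off_sep V X Y" and "\<And>f. f \<in> sep X Y \<Longrightarrow> V f = Zero"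
  shows "V = sv_sum X Y"
  using assms by (auto simp: agrees_off_sep_def sv_sum_def fun_eq_iff)

lemma agrees_off_sep_sep_subset: "agrees_off_sep Z X Y \<Longrightarrow> sep Z Y \<subseteq> sep X Y"
  by (force simp: agrees_off_sep_def sep_def comp_def split: if_splits)

lemma agrees_off_sep_trans:
  assumes "agrees_off_sep V X Y" and "agrees_off_sep Z V Y"
  shows "agrees_off_sep Z X Y"
  unfolding agrees_off_sep_def
proof (intro allI impI)
  fix f assume f: "f \<notin> sep X Y"
  have "V f = comp X Y f" using assms(1) f by (rule agrees_off_sepD)
  moreover from this f have "f \<notin> sep V Y" by (auto simp: sep_def comp_def split: if_splits)
  ultimately show "Z f = comp X Y f" using assms(2) by (auto simp: agrees_off_sep_def comp_def)
qed

lemma supp_comp: "supp (comp X Y) = supp X \<union> supp Y"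
  by (auto simp: supp_def comp_def)

lemma supp_negv [simp]: "supp (negv X) = supp X"
  by (simp add: supp_def)

lemma sep_subset_supp: "sep X Y \<subseteq> supp X"
  by (auto simp: sep_def supp_def)

lemma agrees_off_sep_supp_subset: "agrees_off_sep Z X Y \<Longrightarrow> supp Z \<subseteq> supp X \<union> supp Y"
  by (force simp: agrees_off_sep_def supp_def sep_def comp_def)

lemma agrees_off_sep_comp_same_supp:
  assumes "supp V1 = supp V2"
  shows "agrees_off_sep Z (comp V1 X) (comp V2 X) \<longleftrightarrow> (\<forall>f. f \<notin> sep V1 V2 \<longrightarrow> Z f = comp V1 X f)"
proof -
  have same_zero: "V1 f = Zero \<longleftrightarrow> V2 f = Zero" for f
    using assms by (auto simp: supp_def set_eq_iff)
  have "sep (comp V1 X) (comp V2 X) = sep V1 V2"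
    using same_zero by (auto simp: sep_def comp_def)
  moreover have "comp (comp V1 X) (comp V2 X) = comp V1 X"
    using same_zero by (auto simp: comp_def fun_eq_iff)
  ultimately show ?thesis by (simp add: agrees_off_sep_def)
qed

lemma agrees_off_sep_comp_negv:
  assumes "agrees_off_sep V X (negv Y)"
  shows "agrees_off_sep (comp V Y) X (negv Y)"
  unfolding agrees_off_sep_def
proof (intro allI impI)
  fix f assume "f \<notin> sep X (negv Y)"
  with assms have "V f = comp X (negv Y) f" by (rule agrees_off_sepD)
  then show "comp V Y f = comp X (negv Y) f"
    by (cases "X f"; cases "Y f") (simp_all add: comp_def negv_def)
qed

lemma I'e_eq: "I'e X Y e = {Z. Z e = Zero \<and> agrees_off_sep Z X Y}"
  by (force simp: I'e_def agrees_off_sep_def supp_def sep_def comp_def)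

lemma I'e_sep_psubset:
  assumes "Z \<in> I'e X Y e" and "e \<in> sep X Y"
  shows "sep Z Y \<subset> sep X Y"
proof -
  from assms(1) have "e \<notin> sep Z Y" and "agrees_off_sep Z X Y" by (simp_all add: I'e_eq sep_def)
  with assms(2) agrees_off_sep_sep_subset show ?thesis by blast
qed

lemma I'e_commute: "I'e X Y e = I'e Y X e"
  by (simp add: I'e_eq agrees_off_sep_commute)

lemma I'_commute: "I' X Y = I' Y X"
  unfolding I'_def I'e_eq by (simp add: sep_commute agrees_off_sep_commute)

definition lift :: "sign \<Rightarrow> 'e signvec \<Rightarrow> 'e option signvec" where
  "lift s V = (\<lambda>x. case x of None \<Rightarrow> s | Some e \<Rightarrow> V e)"

lemma lift_simps [simp]: "lift s V None = s" "lift s V (Some e) = V e"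
  by (simp_all add: lift_def)

lemma lift_restrict [simp]: "lift (A None) (\<lambda>e. A (Some e)) = A"
  by (auto simp: lift_def fun_eq_iff split: option.splits)

lemma obtain_lift:
  obtains s V where "A = lift s V"
  by (metis lift_restrict)

lemma lift_eq_iff [simp]: "lift s V = lift t U \<longleftrightarrow> s = t \<and> V = U"
  by (metis lift_simps ext)

lemma supp_lift [simp]:
  "None \<in> supp (lift s V) \<longleftrightarrow> s \<noteq> Zero"
  "Some e \<in> supp (lift s V) \<longleftrightarrow> e \<in> supp V"
  by (simp_all add: supp_def)

lemma sep_lift [simp]:
  "None \<in> sep (lift s V) (lift t U) \<longleftrightarrow> (s, t) \<in> {(Pos, Neg), (Neg, Pos)}"
  "Some e \<in> sep (lift s V) (lift t U) \<longleftrightarrow> e \<in> sep V U"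
  by (auto simp: sep_def)

lemma lift_mem_sv_set_iff [simp]: "lift s V \<in> sv_set (insert None (Some ` E)) \<longleftrightarrow> V \<in> sv_set E"
  by (auto simp: sv_set_def lift_def split: option.split)

lemma comp_lift: "comp (lift s V) (lift t U) = lift (if s \<noteq> Zero then s else t) (comp V U)"
  by (simp add: comp_def lift_def fun_eq_iff split: option.split)

lemma negv_lift [simp]:
  "negv (lift Zero V) = lift Zero (negv V)"
  "negv (lift Pos V) = lift Neg (negv V)"
  "negv (lift Neg V) = lift Pos (negv V)"
  by (simp_all add: negv_def lift_def fun_eq_iff split: option.split)

lemma agrees_off_sep_lift_iff:
  "agrees_off_sep (lift r Z) (lift s X) (lift t Y) \<longleftrightarrow>
     ((s, t) \<in> {(Pos, Neg), (Neg, Pos)} \<or> r = (if s \<noteq> Zero then s else t)) \<and> agrees_off_sep Z X Y"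
  unfolding agrees_off_sep_def by (auto simp: sep_def comp_def lift_def split: option.splits)

lemma affine_om_iff:
  "affine_om E W \<longleftrightarrow> (\<exists>Om. oriented_matroid (Some ` E \<union> {None}) Om \<and> W = {X. lift Pos X \<in> Om})"
proof -
  have eq: "{(\<lambda>e. X (Some e)) | X. X \<in> Om \<and> X None = Pos} = {X. lift Pos X \<in> Om}" for Om :: "'e option signvec set"
    by (auto intro!: exI[of _ "lift Pos _"]) (metis lift_restrict)
  show ?thesis unfolding affine_om_def eq ..
qed

lemma oriented_matroidD:
  assumes "oriented_matroid F Om"
  shows "Om \<subseteq> sv_set F" "X \<in> Om \<Longrightarrow> negv X \<in> Om" "X \<in> Om \<Longrightarrow> Y \<in> Om \<Longrightarrow> comp X Y \<in> Om"
  using assms unfolding oriented_matroid_def by blast+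

text \<open>Axiom (O4) needs equal supports; applying it to \<open>X \<circ> Y\<close> and \<open>Y \<circ> X\<close> removes
  this restriction.\<close>
lemma oriented_matroid_elim:
  assumes om: "oriented_matroid F Om" and X: "X \<in> Om" and Y: "Y \<in> Om" and e: "e \<in> sep X Y"
  shows "\<exists>Z\<in>Om. Z e = Zero \<and> agrees_off_sep Z X Y"
proof -
  have XY: "comp X Y \<in> Om" and YX: "comp Y X \<in> Om"
    using X Y by (simp_all add: oriented_matroidD(3)[OF om])
  have "supp (comp X Y) = supp (comp Y X)" by (auto simp: supp_def comp_def)
  moreover have "sep (comp X Y) (comp Y X) = sep X Y" by (auto simp: sep_def comp_def)
  ultimately obtain Z where Z: "Z \<in> Om" "Z e = Zero"
    and agree: "\<forall>f\<in>F. f \<notin> sep X Y \<longrightarrow> Z f = comp (comp X Y) (comp Y X) f"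
    using om XY YX e unfolding oriented_matroid_def by metis
  have "Z f = comp X Y f" if "f \<notin> sep X Y" for f
  proof (cases "f \<in> F")
    case True
    then show ?thesis using agree that by (simp add: comp_def)
  next
    case False
    then have "Z f = Zero" "X f = Zero" "Y f = Zero"
      using Z(1) X Y oriented_matroidD(1)[OF om] by (auto simp: sv_set_def)
    then show ?thesis by (simp add: comp_def)
  qed
  with Z show ?thesis by (auto simp: agrees_off_sep_def)
qed

context
  fixes F :: "'e option set" and Om :: "'e option signvec set"
  assumes om: "oriented_matroid F Om"
begin

lemma lift_Pos_comp_negv:
  "lift Pos X \<in> Om \<Longrightarrow> lift Pos Y \<in> Om \<Longrightarrow> lift Pos (comp X (negv Y)) \<in> Om"
proof -
  assume "lift Pos X \<in> Om" "lift Pos Y \<in> Om"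
  then have "comp (lift Pos X) (negv (lift Pos Y)) \<in> Om" using oriented_matroidD[OF om] by blast
  then show ?thesis by (simp add: comp_lift)
qed

lemma lift_Pos_elim:
  assumes "lift Pos X \<in> Om" "lift Pos Y \<in> Om" "e \<in> sep X Y"
  shows "\<exists>Z. lift Pos Z \<in> Om \<and> Z \<in> I'e X Y e"
proof -
  have "Some e \<in> sep (lift Pos X) (lift Pos Y)" using assms(3) by simp
  then obtain Z where "Z \<in> Om" "Z (Some e) = Zero" "agrees_off_sep Z (lift Pos X) (lift Pos Y)"
    using oriented_matroid_elim[OF om assms(1,2)] by blast
  moreover obtain r Z' where "Z = lift r Z'" by (rule obtain_lift)
  ultimately show ?thesis by (auto simp: agrees_off_sep_lift_iff I'e_eq)
qed

lemma lift_Zero_elim: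
  assumes V: "lift Zero V \<in> Om" and X: "lift Pos X \<in> Om" and agree: "agrees_off_sep V X Y"
    and f: "f \<in> sep X Y" and Vf: "V f = Y f"
  shows "\<exists>Z. lift Pos Z \<in> Om \<and> Z \<in> I'e X Y f"
proof -
  have "Some f \<in> sep (lift Zero V) (lift Pos X)" using f Vf by (auto simp: sep_def)
  then obtain Z where Z: "Z \<in> Om" "Z (Some f) = Zero" "agrees_off_sep Z (lift Zero V) (lift Pos X)"
    using oriented_matroid_elim[OF om V X] by blast
  obtain r Z' where Z': "Z = lift r Z'" by (rule obtain_lift)
  with Z(3) have "r = Pos" "agrees_off_sep Z' V X" by (simp_all add: agrees_off_sep_lift_iff)
  moreover from this(2) agree have "agrees_off_sep Z' X Y"
    using agrees_off_sep_trans agrees_off_sep_commute by metis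
  ultimately show ?thesis using Z(1,2) Z' by (auto simp: I'e_eq)
qed

lemma lift_Pos_Qset_comp:
  assumes q: "q \<in> Qset {X. lift Pos X \<in> Om}" and C: "lift Pos C \<in> Om"
  shows "lift Pos (comp q C) \<in> Om"
proof -
  obtain X Y where q_def: "q = sv_sum X (negv Y)" and X: "lift Pos X \<in> Om" and Y: "lift Pos Y \<in> Om"
    and no_I'1: "I' X (negv Y) \<inter> {X. lift Pos X \<in> Om} = {}"
    and no_I'2: "I' (negv X) Y \<inter> {X. lift Pos X \<in> Om} = {}"
    using q unfolding Qset_def by blast
  have "lift Neg (negv Y) \<in> Om" using oriented_matroidD(2)[OF om Y] by simp
  moreover have "None \<in> sep (lift Pos X) (lift Neg (negv Y))" by simp
  ultimately obtain V' where V': "V' \<in> Om" "V' None = Zero"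
    "agrees_off_sep V' (lift Pos X) (lift Neg (negv Y))"
    using oriented_matroid_elim[OF om X] by blast
  obtain r V where "V' = lift r V" by (rule obtain_lift)
  with V' have V: "lift Zero V \<in> Om" and agree: "agrees_off_sep V X (negv Y)"
    by (simp_all add: agrees_off_sep_lift_iff)
  have "V f = Zero" if f: "f \<in> sep X (negv Y)" for f
  proof (rule ccontr)
    assume "V f \<noteq> Zero"
    with f consider "V f = negv Y f" | "V f = X f"
      by (cases "V f"; cases "X f"; cases "Y f") (auto simp: sep_def negv_def)
    then show False
    proof cases
      case 1
      then obtain Z where "lift Pos Z \<in> Om" "Z \<in> I'e X (negv Y) f"
        using lift_Zero_elim[OF V X agree f] by blast
      with f no_I'1 show False by (auto simp: I'_def)
    next
      case 2
      have "lift Zero (negv V) \<in> Om" using oriented_matroidD(2)[OF om V] by simp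
      moreover have "agrees_off_sep (negv V) Y (negv X)"
        using agree agrees_off_sep_negv[of V X "negv Y"] by (simp add: agrees_off_sep_commute)
      moreover have "f \<in> sep Y (negv X)" using f by (metis sep_commute sep_negv_left)
      moreover have "negv V f = negv X f" using 2 by simp
      ultimately obtain Z where "lift Pos Z \<in> Om" "Z \<in> I'e (negv X) Y f"
        using lift_Zero_elim[OF _ Y] I'e_commute by metis
      moreover have "f \<in> sep (negv X) Y" using f by (simp add: sep_negv_left)
      ultimately show False using no_I'2 by (auto simp: I'_def)
    qed
  qed
  with agree have "V = q" unfolding q_def by (rule sv_sum_eqI)
  then show ?thesis using oriented_matroidD(3)[OF om V C] by (simp add: comp_lift)
qed

end

definition zero_level :: "'e set \<Rightarrow> 'e signvec set \<Rightarrow> 'e signvec set" where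
  "zero_level E W = {V \<in> sv_set E. \<forall>X\<in>W. comp V X \<in> W \<and> comp (negv V) X \<in> W}"

lemma zero_level_comp_mem: "V \<in> zero_level E W \<Longrightarrow> X \<in> W \<Longrightarrow> comp V X \<in> W"
  by (simp add: zero_level_def)

lemma negv_zero_level: "V \<in> zero_level E W \<Longrightarrow> negv V \<in> zero_level E W"
  by (simp add: zero_level_def sv_set_def)

lemma comp_zero_level:
  assumes "V \<in> zero_level E W" "U \<in> zero_level E W"
  shows "comp V U \<in> zero_level E W"
proof -
  have "comp V U \<in> sv_set E" using assms by (auto simp: zero_level_def sv_set_def comp_def)
  then show ?thesis using assms by (auto simp: zero_level_def comp_assoc_signvec negv_comp)
qed

lemma zerov_zero_level: "zerov \<in> zero_level E W"
  by (auto simp: zero_level_def sv_set_def zerov_def comp_def negv_def)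

lemma Qset_negv: "q \<in> Qset W \<Longrightarrow> negv q \<in> Qset W"
proof -
  assume "q \<in> Qset W"
  then obtain X Y where "q = sv_sum X (negv Y)" "X \<in> W" "Y \<in> W"
    "I' X (negv Y) \<inter> W = {}" "I' (negv X) Y \<inter> W = {}"
    unfolding Qset_def by blast
  moreover have "negv (sv_sum X (negv Y)) = sv_sum Y (negv X)"
  proof
    show "negv (sv_sum X (negv Y)) f = sv_sum Y (negv X) f" for f
      by (cases "X f"; cases "Y f") (auto simp: sv_sum_def negv_def comp_def sep_def)
  qed
  moreover have "I' Y (negv X) = I' (negv X) Y" "I' (negv Y) X = I' X (negv Y)"
    by (simp_all add: I'_commute)
  ultimately show "negv q \<in> Qset W" unfolding Qset_def by blast
qed

locale affine_axioms =
  fixes E :: "'e set" and W :: "'e signvec set"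
  assumes finite_E: "finite E" and W_sv_set: "W \<subseteq> sv_set E"
    and comp_negv_mem: "\<forall>X\<in>W. \<forall>Y\<in>W. comp X (negv Y) \<in> W"
    and I'e_mem: "\<forall>X\<in>W. \<forall>Y\<in>W. sep X Y \<noteq> {} \<longrightarrow> (\<forall>e\<in>sep X Y. I'e X Y e \<inter> W \<noteq> {})"
    and Qset_comp_subset: "compset (Qset W) W \<subseteq> W"
begin

lemma comp_mem: "X \<in> W \<Longrightarrow> Y \<in> W \<Longrightarrow> comp X Y \<in> W"
proof -
  assume "X \<in> W" "Y \<in> W"
  then have "comp X (negv (comp X (negv Y))) \<in> W" using comp_negv_mem by blast
  moreover have "comp X (negv (comp X (negv Y))) = comp X Y"
  proof
    show "comp X (negv (comp X (negv Y))) f = comp X Y f" for f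
      by (cases "X f"; cases "Y f") (simp_all add: comp_def negv_def)
  qed
  ultimately show ?thesis by simp
qed

lemma elim_mem: "X \<in> W \<Longrightarrow> Y \<in> W \<Longrightarrow> e \<in> sep X Y \<Longrightarrow> \<exists>Z\<in>W. Z e = Zero \<and> agrees_off_sep Z X Y"
  using I'e_mem by (fastforce simp: I'e_eq)

lemma comp_zero_level_mem: "X \<in> W \<Longrightarrow> V \<in> zero_level E W \<Longrightarrow> comp X V \<in> W"
proof -
  assume "X \<in> W" "V \<in> zero_level E W"
  then have "comp X (comp V X) \<in> W" by (simp add: comp_mem zero_level_comp_mem)
  moreover have "comp X (comp V X) = comp X V" by (auto simp: comp_def fun_eq_iff)
  ultimately show ?thesis by simp
qed

lemma finite_supp: "X \<in> W \<Longrightarrow> finite (supp X)"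
proof -
  assume "X \<in> W"
  then have "supp X \<subseteq> E" using W_sv_set by (auto simp: sv_set_def supp_def)
  then show ?thesis using finite_E by (rule finite_subset)
qed

lemma finite_sep: "X \<in> W \<Longrightarrow> finite (sep X Y)"
  using finite_subset[OF sep_subset_supp finite_supp] .

lemma Qset_subset_zero_level: "Qset W \<subseteq> zero_level E W"
proof
  fix q assume q: "q \<in> Qset W"
  then obtain X Y where "q = sv_sum X (negv Y)" "X \<in> W" "Y \<in> W" unfolding Qset_def by blast
  then have "q \<in> sv_set E" using W_sv_set by (auto simp: sv_set_def sv_sum_def comp_def)
  with q Qset_negv[OF q] Qset_comp_subset show "q \<in> zero_level E W"
    unfolding zero_level_def compset_def by blast
qed

text \<open>If neither \<open>I'\<close>-set meets \<open>W\<close>, then \<open>X + (-Y) \<in> Q(W)\<close> is such a vector; otherwise a member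
  of \<open>W\<close> in one of them replaces \<open>X\<close> or \<open>Y\<close> with a strictly smaller separation set.\<close>
lemma exists_zero_level_agreeing:
  "X \<in> W \<Longrightarrow> Y \<in> W \<Longrightarrow> \<exists>V\<in>zero_level E W. agrees_off_sep V X (negv Y)"
proof (induction "card (sep X (negv Y))" arbitrary: X Y rule: less_induct)
  case less
  have sep_swap: "sep Y (negv X) = sep X (negv Y)" by (metis sep_commute sep_negv_left)
  have I'_swap: "I' (negv X) Y = (\<Union>e\<in>sep Y (negv X). I'e Y (negv X) e)"
    unfolding I'_def by (simp add: sep_commute I'e_commute)
  consider (Qset) "I' X (negv Y) \<inter> W = {}" "I' (negv X) Y \<inter> W = {}"
    | (left) e X' where "e \<in> sep X (negv Y)" "X' \<in> W" "X' \<in> I'e X (negv Y) e"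
    | (right) e Y' where "e \<in> sep Y (negv X)" "Y' \<in> W" "Y' \<in> I'e Y (negv X) e"
    unfolding I'_swap unfolding I'_def by blast
  then show ?case
  proof cases
    case Qset
    then have "sv_sum X (negv Y) \<in> zero_level E W"
      using less.prems Qset_subset_zero_level unfolding Qset_def by blast
    then show ?thesis using agrees_off_sep_sv_sum by blast
  next
    case (left e X')
    have "card (sep X' (negv Y)) < card (sep X (negv Y))"
      using I'e_sep_psubset[OF left(3,1)] finite_sep[OF less.prems(1)] by (rule psubset_card_mono[rotated])
    then obtain V where "V \<in> zero_level E W" "agrees_off_sep V X' (negv Y)"
      using less.hyps[OF _ left(2) less.prems(2)] by blast
    then show ?thesis using left(3) agrees_off_sep_trans unfolding I'e_eq by blast
  next
    case (right e Y')
    have "card (sep Y' (negv X)) < card (sep X (negv Y))"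
      using I'e_sep_psubset[OF right(3,1)] finite_sep[OF less.prems(1)] sep_swap
      by (simp add: psubset_card_mono)
    then obtain V where V: "V \<in> zero_level E W" "agrees_off_sep V Y' (negv X)"
      using less.hyps[OF _ right(2) less.prems(1)] by blast
    from V(2) right(3) have "agrees_off_sep V Y (negv X)"
      unfolding I'e_eq using agrees_off_sep_trans by blast
    then have "agrees_off_sep (negv V) X (negv Y)"
      using agrees_off_sep_negv[of V Y "negv X"] by (simp add: agrees_off_sep_commute)
    with negv_zero_level[OF V(1)] show ?thesis by blast
  qed
qed

lemma zero_level_supp_subset:
  assumes V: "V \<in> zero_level E W" and X: "X \<in> W" and V_supp: "supp V \<subseteq> D \<union> supp X"
    and X_min: "\<And>X'. X' \<in> W \<Longrightarrow> card (supp X - D) \<le> card (supp X' - D)"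
  shows "supp V \<subseteq> D"
proof
  fix f assume f: "f \<in> supp V"
  show "f \<in> D"
  proof (rule ccontr)
    assume fD: "f \<notin> D"
    with f V_supp have Xf: "X f \<noteq> Zero" by (auto simp: supp_def)
    obtain V' where V': "V' \<in> zero_level E W" "supp V' = supp V" "f \<in> sep X (comp V' X)"
    proof (cases "V f = X f")
      case True
      then have "f \<in> sep X (comp (negv V) X)"
        using Xf by (cases "X f") (auto simp: sep_def comp_def negv_def)
      then show thesis using that negv_zero_level[OF V] by simp
    next
      case False
      then have "f \<in> sep X (comp V X)"
        using Xf f by (cases "X f"; cases "V f") (auto simp: sep_def comp_def supp_def)
      then show thesis using that V by simp
    qed
    then obtain X' where X': "X' \<in> W" "X' f = Zero" "agrees_off_sep X' X (comp V' X)"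
      using elim_mem[OF X zero_level_comp_mem[OF V'(1) X]] by blast
    have "supp X' \<subseteq> supp X \<union> supp V"
      using agrees_off_sep_supp_subset[OF X'(3)] V'(2) by (auto simp: supp_comp)
    moreover have "f \<notin> supp X'" using X'(2) by (simp add: supp_def)
    ultimately have "supp X' - D \<subseteq> supp X - D - {f}" using V_supp by blast
    moreover have "f \<in> supp X - D" using Xf fD by (simp add: supp_def)
    ultimately have "supp X' - D \<subset> supp X - D" by blast
    then have "card (supp X' - D) < card (supp X - D)"
      using finite_supp[OF X] by (simp add: psubset_card_mono)
    with X_min[OF X'(1)] show False by simp
  qed
qed

text \<open>Eliminate \<open>e\<close> between \<open>V\<^sub>1 \<circ> X\<close> and \<open>V\<^sub>2 \<circ> X\<close>, and between \<open>(-V\<^sub>1) \<circ> X\<close> and \<open>(-V\<^sub>2) \<circ> X\<close>,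
  and join the results \<open>Z\<^sub>1\<close>, \<open>Z\<^sub>2\<close> by a zero-level vector agreeing with \<open>Z\<^sub>1 \<circ> (-Z\<^sub>2)\<close>. It
  vanishes at \<open>e\<close> and equals \<open>V\<^sub>1 \<circ> V\<^sub>2\<close> on \<open>supp V\<^sub>1\<close>; choosing \<open>X\<close> with \<open>supp X - supp V\<^sub>1\<close>
  as small as possible forces it to vanish elsewhere.\<close>
lemma zero_level_elim:
  assumes V1: "V1 \<in> zero_level E W" and V2: "V2 \<in> zero_level E W"
    and same_supp: "supp V1 = supp V2" and e: "e \<in> sep V1 V2"
  shows "\<exists>V\<in>zero_level E W. V e = Zero \<and> agrees_off_sep V V1 V2"
proof (cases "W = {}")
  case True
  have "sv_sum V1 V2 \<in> sv_set E"
    using V1 V2 by (auto simp: zero_level_def sv_set_def sv_sum_def comp_def)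
  then have "sv_sum V1 V2 \<in> zero_level E W" using True by (simp add: zero_level_def)
  moreover have "sv_sum V1 V2 e = Zero" using e by (simp add: sv_sum_def)
  ultimately show ?thesis using agrees_off_sep_sv_sum by blast
next
  case False
  define D where "D = supp V1"
  obtain X where X: "X \<in> W" and X_min: "\<And>X'. X' \<in> W \<Longrightarrow> card (supp X - D) \<le> card (supp X' - D)"
    using False ex_has_least_nat[of "\<lambda>X. X \<in> W" _ "\<lambda>X. card (supp X - D)"] by blast
  have same_zero: "V2 f = Zero \<longleftrightarrow> V1 f = Zero" for f
    using same_supp by (auto simp: supp_def set_eq_iff)
  have "e \<in> sep (comp V1 X) (comp V2 X)" using e by (auto simp: sep_def comp_def)
  then obtain Z1 where Z1: "Z1 \<in> W" "Z1 e = Zero" "\<And>f. f \<notin> sep V1 V2 \<Longrightarrow> Z1 f = comp V1 X f"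
    using elim_mem[OF zero_level_comp_mem[OF V1 X] zero_level_comp_mem[OF V2 X]]
    unfolding agrees_off_sep_comp_same_supp[OF same_supp] by blast
  have "e \<in> sep (comp (negv V1) X) (comp (negv V2) X)"
    using e by (auto simp: sep_def comp_def negv_def)
  then obtain Z2 where Z2: "Z2 \<in> W" "Z2 e = Zero" "\<And>f. f \<notin> sep V1 V2 \<Longrightarrow> Z2 f = comp (negv V1) X f"
    using elim_mem[OF zero_level_comp_mem[OF negv_zero_level[OF V1] X]
        zero_level_comp_mem[OF negv_zero_level[OF V2] X]]
    unfolding agrees_off_sep_comp_same_supp[of "negv V1" "negv V2", simplified, OF same_supp]
    by blast
  obtain V where V: "V \<in> zero_level E W" "agrees_off_sep V Z1 (negv Z2)"
    using exists_zero_level_agreeing[OF Z1(1) Z2(1)] by blast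
  have V_eq: "V f = comp V1 V2 f" if "f \<notin> sep V1 V2" "f \<in> D \<or> X f = Zero" for f
  proof -
    have "f \<notin> sep Z1 (negv Z2) \<and> comp Z1 (negv Z2) f = comp V1 V2 f"
      using Z1(3)[OF that(1)] Z2(3)[OF that(1)] that(2) same_zero[of f]
      by (cases "V1 f"; cases "X f") (auto simp: sep_def comp_def negv_def D_def supp_def)
    then show ?thesis using agrees_off_sepD[OF V(2)] by simp
  qed
  have "V e = Zero"
    using agrees_off_sepD[OF V(2)] Z1(2) Z2(2) by (simp add: sep_def comp_def)
  moreover have "supp V \<subseteq> D"
  proof (rule zero_level_supp_subset[OF V(1) X _ X_min], rule subsetI, rule ccontr)
    fix f assume "f \<in> supp V" "f \<notin> D \<union> supp X"
    then have "V1 f = Zero" "X f = Zero" "V f \<noteq> Zero" unfolding D_def supp_def by auto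
    moreover from this(1) have "f \<notin> sep V1 V2" by (simp add: sep_def)
    ultimately show False using V_eq same_zero by (simp add: comp_def)
  qed
  moreover have "agrees_off_sep V V1 V2"
    unfolding agrees_off_sep_def
  proof (intro allI impI)
    fix f assume f: "f \<notin> sep V1 V2"
    show "V f = comp V1 V2 f"
    proof (cases "f \<in> D")
      case True
      with f V_eq show ?thesis by blast
    next
      case False
      with \<open>supp V \<subseteq> D\<close> same_zero[of f] show ?thesis by (auto simp: D_def supp_def comp_def)
    qed
  qed
  ultimately show ?thesis using V(1) by blast
qed

lemma elim_via_zero_level:
  assumes X: "X \<in> W" and Y: "Y \<in> W" and V: "V \<in> zero_level E W"
    and agree: "agrees_off_sep V X (negv Y)" and e: "e \<in> sep X (negv Y)" and Ve: "V e = negv X e"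
  shows "\<exists>Z\<in>W. Z e = Zero \<and> agrees_off_sep Z X (negv Y)"
proof -
  have "e \<in> sep X (comp V Y)" using e Ve by (cases "X e") (auto simp: sep_def comp_def negv_def)
  then obtain Z where Z: "Z \<in> W" "Z e = Zero" "agrees_off_sep Z (comp V Y) X"
    using elim_mem[OF X zero_level_comp_mem[OF V Y]] agrees_off_sep_commute by blast
  have "agrees_off_sep (comp V Y) (negv Y) X"
    using agrees_off_sep_comp_negv[OF agree] agrees_off_sep_commute by blast
  with Z(3) have "agrees_off_sep Z X (negv Y)"
    using agrees_off_sep_trans agrees_off_sep_commute by blast
  with Z(1,2) show ?thesis by blast
qed

definition completion :: "'e option signvec set" where
  "completion = {lift Zero V | V. V \<in> zero_level E W} \<union> {lift Pos X | X. X \<in> W}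
     \<union> {lift Neg (negv X) | X. X \<in> W}"

lemma lift_mem_completion_iff:
  "lift s V \<in> completion \<longleftrightarrow>
     s = Zero \<and> V \<in> zero_level E W \<or> s = Pos \<and> V \<in> W \<or> s = Neg \<and> negv V \<in> W"
  unfolding completion_def by (auto intro: exI[of _ "negv V"])

lemma completion_elim_Pos_Neg:
  assumes X: "X \<in> W" and Y: "Y \<in> W" and e: "e \<in> sep (lift Pos X) (lift Neg (negv Y))"
  shows "\<exists>Z\<in>completion. Z e = Zero \<and> agrees_off_sep Z (lift Pos X) (lift Neg (negv Y))"
proof -
  obtain V where V: "V \<in> zero_level E W" and agree: "agrees_off_sep V X (negv Y)"
    using exists_zero_level_agreeing[OF X Y] by blast
  have lifted: "agrees_off_sep (lift r Z) (lift Pos X) (lift Neg (negv Y))"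
    if "agrees_off_sep Z X (negv Y)" for r Z
    using that by (simp add: agrees_off_sep_lift_iff)
  show ?thesis
  proof (cases e)
    case None
    then show ?thesis using V lifted[OF agree, of Zero]
      by (intro bexI[of _ "lift Zero V"]) (simp_all add: lift_mem_completion_iff)
  next
    case (Some f)
    with e have f: "f \<in> sep X (negv Y)" by simp
    then have XY: "X f \<noteq> Zero" "Y f = X f"
      by (cases "X f"; cases "Y f"; simp add: sep_def negv_def)+
    consider "V f = Zero" | "V f = negv X f" | "V f = X f"
      using XY by (cases "V f"; cases "X f") (auto simp: negv_def)
    then show ?thesis
    proof cases
      case 1
      then show ?thesis using V Some lifted[OF agree, of Zero]
        by (intro bexI[of _ "lift Zero V"]) (simp_all add: lift_mem_completion_iff)
    next
      case 2
      then obtain Z where "Z \<in> W" "Z f = Zero" "agrees_off_sep Z X (negv Y)"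
        using elim_via_zero_level[OF X Y V agree f] by blast
      then show ?thesis using Some lifted
        by (intro bexI[of _ "lift Pos Z"]) (simp_all add: lift_mem_completion_iff)
    next
      case 3
      have "agrees_off_sep (negv V) Y (negv X)"
        using agree agrees_off_sep_negv[of V X "negv Y"] by (simp add: agrees_off_sep_commute)
      moreover have "f \<in> sep Y (negv X)" using f by (metis sep_commute sep_negv_left)
      moreover have "negv V f = negv Y f" using 3 XY by simp
      ultimately obtain Z where "Z \<in> W" "Z f = Zero" "agrees_off_sep Z Y (negv X)"
        using elim_via_zero_level[OF Y X negv_zero_level[OF V]] by blast
      moreover from this(3) have "agrees_off_sep (negv Z) X (negv Y)"
        using agrees_off_sep_negv[of Z Y "negv X"] by (simp add: agrees_off_sep_commute)
      ultimately show ?thesis using Some lifted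
        by (intro bexI[of _ "lift Neg (negv Z)"]) (simp_all add: lift_mem_completion_iff)
    qed
  qed
qed

lemma completion_negv: "A \<in> completion \<Longrightarrow> negv A \<in> completion"
proof -
  assume "A \<in> completion"
  moreover obtain s V where "A = lift s V" by (rule obtain_lift)
  ultimately show ?thesis by (cases s) (auto simp: lift_mem_completion_iff negv_zero_level)
qed

lemma completion_comp:
  assumes "A \<in> completion" and "B \<in> completion"
  shows "comp A B \<in> completion"
proof -
  obtain s V t U where A: "A = lift s V" and B: "B = lift t U" by (meson obtain_lift)
  have neg_mem: "X \<in> W \<Longrightarrow> negv Y \<in> W \<Longrightarrow> comp X Y \<in> W" for X Y
    using comp_negv_mem negv_negv by metis
  from assms show ?thesis unfolding A B comp_lift lift_mem_completion_iff
    by (auto simp: negv_comp intro: comp_zero_level zero_level_comp_mem comp_zero_level_mem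
        comp_mem neg_mem negv_zero_level)
qed

lemma completion_elim:
  assumes A: "A \<in> completion" and B: "B \<in> completion" and same_supp: "supp A = supp B"
    and e: "e \<in> sep A B"
  shows "\<exists>Z\<in>completion. Z e = Zero \<and> agrees_off_sep Z A B"
proof -
  obtain s V t U where A_def: "A = lift s V" and B_def: "B = lift t U" by (meson obtain_lift)
  have "x \<in> supp (lift s V) \<longleftrightarrow> x \<in> supp (lift t U)" for x
    using same_supp unfolding A_def B_def by simp
  from this[of None] this[of "Some _"] have "s = Zero \<longleftrightarrow> t = Zero" and "supp V = supp U"
    by auto
  moreover have A': "s = Zero \<and> V \<in> zero_level E W \<or> s = Pos \<and> V \<in> W \<or> s = Neg \<and> negv V \<in> W"
    and B': "t = Zero \<and> U \<in> zero_level E W \<or> t = Pos \<and> U \<in> W \<or> t = Neg \<and> negv U \<in> W"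
    using A B unfolding A_def B_def lift_mem_completion_iff .
  ultimately consider
      "s = Zero" "t = Zero" "V \<in> zero_level E W" "U \<in> zero_level E W" "supp V = supp U"
    | "s = Pos" "t = Pos" "V \<in> W" "U \<in> W"
    | "s = Neg" "t = Neg" "negv V \<in> W" "negv U \<in> W"
    | "s = Pos" "t = Neg" "V \<in> W" "negv U \<in> W"
    | "s = Neg" "t = Pos" "negv V \<in> W" "U \<in> W"
    by auto
  then show ?thesis
  proof cases
    case 1
    with e obtain f where f: "e = Some f" "f \<in> sep V U" unfolding A_def B_def by (cases e) auto
    then obtain Z where "Z \<in> zero_level E W" "Z f = Zero" "agrees_off_sep Z V U"
      using zero_level_elim[OF 1(3-5)] by blast
    with 1 f show ?thesis unfolding A_def B_def
      by (intro bexI[of _ "lift Zero Z"]) (simp_all add: agrees_off_sep_lift_iff lift_mem_completion_iff)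
  next
    case 2
    with e obtain f where f: "e = Some f" "f \<in> sep V U" unfolding A_def B_def by (cases e) auto
    then obtain Z where "Z \<in> W" "Z f = Zero" "agrees_off_sep Z V U"
      using elim_mem[OF 2(3,4)] by blast
    with 2 f show ?thesis unfolding A_def B_def
      by (intro bexI[of _ "lift Pos Z"]) (simp_all add: agrees_off_sep_lift_iff lift_mem_completion_iff)
  next
    case 3
    with e obtain f where "e = Some f" "f \<in> sep (negv V) (negv U)" unfolding A_def B_def by (cases e) auto
    then obtain Z where "Z \<in> W" "Z f = Zero" "agrees_off_sep Z (negv V) (negv U)"
      using elim_mem[OF 3(3,4)] by blast
    moreover from this(3) have "agrees_off_sep (negv Z) V U"
      using agrees_off_sep_negv[of "negv Z" V U] by simp
    ultimately show ?thesis using 3 \<open>e = Some f\<close> unfolding A_def B_def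
      by (intro bexI[of _ "lift Neg (negv Z)"]) (simp_all add: agrees_off_sep_lift_iff lift_mem_completion_iff)
  next
    case 4
    then show ?thesis using completion_elim_Pos_Neg[OF 4(3,4)] e unfolding A_def B_def by simp
  next
    case 5
    with e have "e \<in> sep (lift Pos U) (lift Neg (negv (negv V)))"
      unfolding A_def B_def by (simp add: sep_commute)
    then obtain Z where "Z \<in> completion" "Z e = Zero" "agrees_off_sep Z (lift Pos U) (lift Neg V)"
      using completion_elim_Pos_Neg[OF 5(4,3)] by auto
    with 5 show ?thesis unfolding A_def B_def using agrees_off_sep_commute by blast
  qed
qed

lemma oriented_matroid_completion: "oriented_matroid (Some ` E \<union> {None}) completion"
  unfolding oriented_matroid_def
proof (intro conjI ballI allI impI)
  show "completion \<subseteq> sv_set (Some ` E \<union> {None})"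
  proof
    fix A assume "A \<in> completion"
    moreover obtain s V where "A = lift s V" by (rule obtain_lift)
    moreover have "negv V \<in> sv_set E \<Longrightarrow> V \<in> sv_set E" by (simp add: sv_set_def)
    ultimately show "A \<in> sv_set (Some ` E \<union> {None})"
      using W_sv_set by (auto simp: lift_mem_completion_iff zero_level_def)
  qed
  have "lift Zero (zerov :: 'e signvec) = zerov" by (simp add: zerov_def lift_def fun_eq_iff split: option.split)
  moreover have "lift Zero zerov \<in> completion" using zerov_zero_level by (simp add: lift_mem_completion_iff)
  ultimately show "zerov \<in> completion" by simp
next
  fix X Y e assume "X \<in> completion" "Y \<in> completion" "supp X = supp Y \<and> e \<in> sep X Y"
  then obtain Z where "Z \<in> completion" "Z e = Zero" "agrees_off_sep Z X Y"
    using completion_elim by blast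
  moreover from this(3) have "\<forall>f. f \<notin> sep X Y \<longrightarrow> Z f = comp X Y f \<and> Z f = comp Y X f"
    by (simp add: agrees_off_sep_def comp_commute_off_sep)
  ultimately show "\<exists>Z\<in>completion. Z e = Zero \<and>
      (\<forall>f\<in>Some ` E \<union> {None}. f \<notin> sep X Y \<longrightarrow> Z f = comp X Y f \<and> Z f = comp Y X f)"
    by blast
qed (simp_all add: completion_negv completion_comp)

lemma is_affine_om: "affine_om E W"
  unfolding affine_om_iff using oriented_matroid_completion
  by (intro exI[of _ completion]) (simp add: lift_mem_completion_iff)

end

lemma affine_axioms_if_affine_om:
  assumes "affine_om E W" and "finite E"
  shows "affine_axioms E W"
proof -
  obtain Om where om: "oriented_matroid (Some ` E \<union> {None}) Om" and W: "W = {X. lift Pos X \<in> Om}"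
    using assms(1) affine_om_iff by blast
  show ?thesis
  proof
    show "W \<subseteq> sv_set E"
    proof
      fix X assume "X \<in> W"
      then have "lift Pos X \<in> sv_set (Some ` E \<union> {None})"
        using oriented_matroidD(1)[OF om] unfolding W by blast
      then show "X \<in> sv_set E" by simp
    qed
    show "\<forall>X\<in>W. \<forall>Y\<in>W. comp X (negv Y) \<in> W"
      unfolding W by (simp add: lift_Pos_comp_negv[OF om])
    show "\<forall>X\<in>W. \<forall>Y\<in>W. sep X Y \<noteq> {} \<longrightarrow> (\<forall>e\<in>sep X Y. I'e X Y e \<inter> W \<noteq> {})"
    proof (intro ballI impI)
      fix X Y e assume "X \<in> W" "Y \<in> W" "e \<in> sep X Y"
      then obtain Z where "lift Pos Z \<in> Om" "Z \<in> I'e X Y e"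
        using lift_Pos_elim[OF om] unfolding W by blast
      then show "I'e X Y e \<inter> W \<noteq> {}" unfolding W by blast
    qed
    show "compset (Qset W) W \<subseteq> W"
    proof
      fix q assume "q \<in> compset (Qset W) W"
      then obtain Q C where "q = comp Q C" "Q \<in> Qset W" "C \<in> W" unfolding compset_def by blast
      then show "q \<in> W" using lift_Pos_Qset_comp[OF om] unfolding W by blast
    qed
  qed (rule assms(2))
qed

theorem corollary5p2:
  fixes E :: "'e set" and W :: "'e signvec set"
  assumes "finite E" and "W \<subseteq> sv_set E"
  shows "affine_om E W \<longleftrightarrow>
           ((\<forall>X\<in>W. \<forall>Y\<in>W. comp X (negv Y) \<in> W) \<and>
            (\<forall>X\<in>W. \<forall>Y\<in>W. sep X Y \<noteq> {} \<longrightarrow>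
                (\<forall>e\<in>sep X Y. I'e X Y e \<inter> W \<noteq> {})) \<and>
            compset (Qset W) W \<subseteq> W)"
proof
  assume "affine_om E W"
  then interpret affine_axioms E W using affine_axioms_if_affine_om assms(1) by blast
  show "(\<forall>X\<in>W. \<forall>Y\<in>W. comp X (negv Y) \<in> W) \<and>
        (\<forall>X\<in>W. \<forall>Y\<in>W. sep X Y \<noteq> {} \<longrightarrow> (\<forall>e\<in>sep X Y. I'e X Y e \<inter> W \<noteq> {})) \<and>
        compset (Qset W) W \<subseteq> W"
    using comp_negv_mem I'e_mem Qset_comp_subset by blast
next
  assume "(\<forall>X\<in>W. \<forall>Y\<in>W. comp X (negv Y) \<in> W) \<and>
        (\<forall>X\<in>W. \<forall>Y\<in>W. sep X Y \<noteq> {} \<longrightarrow> (\<forall>e\<in>sep X Y. I'e X Y e \<inter> W \<noteq> {})) \<and>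
        compset (Qset W) W \<subseteq> W"
  with assms interpret affine_axioms E W by unfold_locales blast+
  show "affine_om E W" by (rule is_affine_om)
qed

end
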